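(* Let $\Delta$ be a $\Gamma_{m,n}$-semimodule and $x\in\mathbb{Z}$. Then: (1) the number of $m$-generators of $\Delta$ in $[x,x+n)$ equals $g(x-m)-g(x)$; (2) the number of $m$-cogenerators of $\Delta$ in $[x,x+n)$ equals $g(x)-g(x+m)$; (3) the number of $m$-generators of $\Delta$ in $[x,x+n)$ equals the number of $n$-cogenerators of $\Delta$ in $[x-m,x)$.
   Context: Let $m,n$ be coprime positive integers and $\Gamma_{m,n}=\{am+bn:a,b\in\mathbb{Z}_{\ge0}\}$. A $\Gamma_{m,n}$-semimodule is a subset $\Delta\subset\mathbb{Z}_{\ge0}$ with $\Delta+\Gamma_{m,n}\subset\Delta$. For $p\in\{m,n\}$, a $p$-generator of $\Delta$ is an integer $a\in\Delta$ with $a-p\notin\Delta$, and a $p$-cogenerator is an integer $b\notin\Delta$ with $b+p\in\Delta$. For $y\in\mathbb{Z}$, $g(y)=\#\big(([y,y+n)\cap\mathbb{Z})\setminus\Delta\big)$. Intervals denote sets of integers. *)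

theory Defs
  imports Main
begin

definition Gamma :: "nat \<Rightarrow> nat \<Rightarrow> int set" where
  "Gamma m n = {int (a * m + b * n) | a b. True}"

definition semimodule :: "nat \<Rightarrow> nat \<Rightarrow> int set \<Rightarrow> bool" where
  "semimodule m n D \<longleftrightarrow> D \<subseteq> {0..} \<and> (\<forall>d\<in>D. \<forall>s\<in>Gamma m n. d + s \<in> D)"

definition is_gen :: "int set \<Rightarrow> nat \<Rightarrow> int \<Rightarrow> bool" where
  "is_gen D p a \<longleftrightarrow> a \<in> D \<and> a - int p \<notin> D"

definition is_cogen :: "int set \<Rightarrow> nat \<Rightarrow> int \<Rightarrow> bool" where
  "is_cogen D p b \<longleftrightarrow> b \<notin> D \<and> b + int p \<in> D"

definition gfun :: "int set \<Rightarrow> nat \<Rightarrow> int \<Rightarrow> nat" where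
  "gfun D n y = card ({y..<y + int n} - D)"

end

theory Submission
  imports Defs
begin

text \<open>
  Since \<open>\<Delta> + m \<subseteq> \<Delta>\<close>, shifting a window of length \<open>n\<close> back by \<open>m\<close> keeps all its
  gaps and adds exactly the \<open>m\<close>-generators of the original window; shifting it forward
  by \<open>m\<close> loses exactly the \<open>m\<close>-cogenerators. Sliding the window
  \<open>[y, y + n)\<close> one step to the right removes \<open>y\<close> and adds \<open>y + n\<close>; as \<open>y \<in> \<Delta>\<close> forces
  \<open>y + n \<in> \<Delta>\<close>, the gap count drops by one exactly when \<open>y\<close> is an \<open>n\<close>-cogenerator.
  Telescoping over \<open>[x - m, x)\<close> expresses \<open>g(x - m) - g(x)\<close> as the number of
  \<open>n\<close>-cogenerators there, and (3) follows from (1).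
\<close>

lemma semimodule_add_closed:
  assumes "semimodule m n D" "d \<in> D"
  shows "d + int m \<in> D" "d + int n \<in> D"
proof -
  have "int m \<in> Gamma m n" "int n \<in> Gamma m n"
    unfolding Gamma_def by (force intro: exI[of _ 1] exI[of _ 0])+
  with assms show "d + int m \<in> D" "d + int n \<in> D"
    unfolding semimodule_def by auto
qed

lemma gfun_shift_eq_card:
  "gfun D n (x + c) = card {a \<in> {x..<x + int n}. a + c \<notin> D}"
proof -
  have "{x + c..<x + c + int n} - D = (\<lambda>a. a + c) ` {a \<in> {x..<x + int n}. a + c \<notin> D}"
  proof (intro equalityI subsetI)
    fix z assume "z \<in> {x + c..<x + c + int n} - D"
    then show "z \<in> (\<lambda>a. a + c) ` {a \<in> {x..<x + int n}. a + c \<notin> D}"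
      by (auto intro: image_eqI[of _ _ "z - c"])
  qed auto
  moreover have "inj_on (\<lambda>a. a + c) A" for A :: "int set"
    by (auto simp: inj_on_def)
  ultimately show ?thesis
    unfolding gfun_def by (simp add: card_image)
qed

lemma gfun_eq_card_gaps:
  "gfun D n x = card {a \<in> {x..<x + int n}. a \<notin> D}"
  using gfun_shift_eq_card[of D n x 0] by simp

lemma card_window_filter_Un:
  assumes "\<And>a. \<not> (P a \<and> Q a)"
  shows "card {a \<in> {x..<x + int n}. P a \<or> Q a}
           = card {a \<in> {x..<x + int n}. P a} + card {a \<in> {x..<x + int n}. Q a}"
proof -
  have "{a \<in> {x..<x + int n}. P a \<or> Q a}
          = {a \<in> {x..<x + int n}. P a} \<union> {a \<in> {x..<x + int n}. Q a}"
    by auto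
  then show ?thesis
    using assms by (subst card_Un_disjoint[symmetric]) (auto intro: finite_subset[of _ "{x..<x + int n}"])
qed

lemma gfun_shift_back_eq_add_card_gen:
  assumes closed: "\<And>d. d \<in> D \<Longrightarrow> d + int p \<in> D"
  shows "gfun D n (x - int p) = gfun D n x + card {a \<in> {x..<x + int n}. is_gen D p a}"
proof -
  have "{a \<in> {x..<x + int n}. a - int p \<notin> D}
          = {a \<in> {x..<x + int n}. a \<notin> D \<or> is_gen D p a}"
    using closed[of "_ - int p"] by (auto simp: is_gen_def)
  then have "gfun D n (x - int p) = card {a \<in> {x..<x + int n}. a \<notin> D \<or> is_gen D p a}"
    using gfun_shift_eq_card[of D n x "- int p"] by simp
  also have "\<dots> = gfun D n x + card {a \<in> {x..<x + int n}. is_gen D p a}"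
    by (subst card_window_filter_Un) (auto simp: is_gen_def gfun_eq_card_gaps)
  finally show ?thesis .
qed

lemma gfun_eq_shift_add_card_cogen:
  assumes closed: "\<And>d. d \<in> D \<Longrightarrow> d + int p \<in> D"
  shows "gfun D n x = gfun D n (x + int p) + card {b \<in> {x..<x + int n}. is_cogen D p b}"
proof -
  have "{a \<in> {x..<x + int n}. a \<notin> D}
          = {a \<in> {x..<x + int n}. a + int p \<notin> D \<or> is_cogen D p a}"
    using closed by (auto simp: is_cogen_def)
  then have "gfun D n x = card {a \<in> {x..<x + int n}. a + int p \<notin> D \<or> is_cogen D p a}"
    by (simp only: gfun_eq_card_gaps)
  also have "\<dots> = gfun D n (x + int p) + card {b \<in> {x..<x + int n}. is_cogen D p b}"
    by (subst card_window_filter_Un) (auto simp: is_cogen_def gfun_shift_eq_card)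
  finally show ?thesis .
qed

lemma gfun_eq_succ_add_cogen:
  assumes closed: "\<And>d. d \<in> D \<Longrightarrow> d + int n \<in> D"
  shows "gfun D n y = gfun D n (y + 1) + (if is_cogen D n y then 1 else 0)"
proof (cases "n = 0")
  case True
  then show ?thesis by (simp add: gfun_def is_cogen_def)
next
  case False
  define A where "A = {y + 1..<y + int n} - D"
  have "{y..<y + int n} = insert y {y + 1..<y + int n}"
    "{y + 1..<y + 1 + int n} = insert (y + int n) {y + 1..<y + int n}"
    using False by auto
  then have "{y..<y + int n} - D = (if y \<in> D then A else insert y A)"
    "{y + 1..<y + 1 + int n} - D = (if y + int n \<in> D then A else insert (y + int n) A)"
    by (auto simp: A_def)
  moreover have "finite A" "y \<notin> A" "y + int n \<notin> A"
    by (auto simp: A_def)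
  ultimately show ?thesis
    using closed[of y] by (auto simp: gfun_def is_cogen_def)
qed

lemma gfun_diff_eq_card_cogen:
  assumes closed: "\<And>d. d \<in> D \<Longrightarrow> d + int n \<in> D"
  shows "gfun D n (x - int k) = gfun D n x + card {b \<in> {x - int k..<x}. is_cogen D n b}"
proof (induction k)
  case 0
  then show ?case by simp
next
  case (Suc k)
  define p where "p = x - int (Suc k)"
  define S where "S = {b \<in> {x - int k..<x}. is_cogen D n b}"
  have "x - int k = p + 1"
    by (simp add: p_def)
  then have "{p..<x} = insert p {x - int k..<x}"
    by (auto simp: p_def)
  then have "{b \<in> {p..<x}. is_cogen D n b} = (if is_cogen D n p then insert p S else S)"
    by (auto simp: S_def)
  moreover have "finite S" "p \<notin> S"
    using \<open>x - int k = p + 1\<close> by (auto simp: S_def intro: finite_subset[of _ "{x - int k..<x}"])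
  ultimately have "card {b \<in> {p..<x}. is_cogen D n b} = card S + (if is_cogen D n p then 1 else 0)"
    by simp
  with Suc.IH gfun_eq_succ_add_cogen[OF closed, of p] \<open>x - int k = p + 1\<close>
  have "gfun D n p = gfun D n x + card {b \<in> {p..<x}. is_cogen D n b}"
    by (simp add: S_def)
  then show ?case
    by (simp add: p_def)
qed

theorem mainTheorem13:
  fixes m n :: nat and D :: "int set" and x :: int
  assumes "m > 0" "n > 0" "coprime m n" "semimodule m n D"
  shows "(int (card {a \<in> {x..<x + int n}. is_gen D m a})
           = int (gfun D n (x - int m)) - int (gfun D n x))
         \<and> (int (card {b \<in> {x..<x + int n}. is_cogen D m b})
           = int (gfun D n x) - int (gfun D n (x + int m)))
         \<and> (card {a \<in> {x..<x + int n}. is_gen D m a}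
           = card {b \<in> {x - int m..<x}. is_cogen D n b})"
proof -
  note closed = semimodule_add_closed[OF assms(4)]
  have "gfun D n (x - int m) = gfun D n x + card {a \<in> {x..<x + int n}. is_gen D m a}"
    using closed(1) by (rule gfun_shift_back_eq_add_card_gen)
  moreover have "gfun D n x = gfun D n (x + int m) + card {b \<in> {x..<x + int n}. is_cogen D m b}"
    using closed(1) by (rule gfun_eq_shift_add_card_cogen)
  moreover have "gfun D n (x - int m) = gfun D n x + card {b \<in> {x - int m..<x}. is_cogen D n b}"
    using closed(2) by (rule gfun_diff_eq_card_cogen)
  ultimately show ?thesis
    by simp
qed

end
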